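(* Let $A\in\mathbb{R}^{m\times N}$ and $K\subseteq[N]$. The following are equivalent: (i) $\ker(A)\cap N_K\cap H_K=\{0\}$; (ii) $\mathbb{1}_K$ is the unique solution of $(P_{\mathrm{bin}})$ with $b=A\mathbb{1}_K$. Moreover, if one of these holds, then $\mathbb{1}_K$ is the unique vector of minimal $\|\cdot\|_0$ among all $x\in\{0,1\}^N$ with $Ax=A\mathbb{1}_K$.
   Context: $[N]=\{1,\dots,N\}$; $\mathbb{1}_K$ is the vector with entries $1$ on $K$ and $0$ elsewhere; $K^C=[N]\setminus K$; for $w\in\mathbb{R}^N$ and $S\subseteq[N]$, $w_S$ denotes the vector agreeing with $w$ on $S$ and zero elsewhere; $\|x\|_0$ is the number of nonzero entries. $N_K=\{w\in\mathbb{R}^N:\|w_K\|_1\ge\|w_{K^C}\|_1\}$ and $H_K=\{w\in\mathbb{R}^N: w_i\le 0 \text{ for } i\in K,\ w_i\ge 0\text{ for } i\in K^C\}$. $(P_{\mathrm{bin}})$ is the program $\min\|x\|_1$ subject to $Ax=b$ and $x\in[0,1]^N$; "unique solution" means unique minimizer. *)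

theory Defs
  imports "HOL-Analysis.Analysis"
begin

text \<open>Vectors in R^N are real^'n with a finite index type 'n (N = CARD('n)),
  matrices A in R^(m x N) are real^'n^'m.\<close>

definition ind_vec :: "'n::finite set \<Rightarrow> real^'n" where
  "ind_vec K = (\<chi> i. if i \<in> K then 1 else 0)"

definition l1norm :: "real^'n::finite \<Rightarrow> real" where
  "l1norm x = (\<Sum>i\<in>UNIV. \<bar>x $ i\<bar>)"

definition restrict_vec :: "real^'n::finite \<Rightarrow> 'n set \<Rightarrow> real^'n" where
  "restrict_vec w S = (\<chi> i. if i \<in> S then w $ i else 0)"

definition l0norm :: "real^'n::finite \<Rightarrow> nat" where
  "l0norm x = card {i. x $ i \<noteq> 0}"

definition NK :: "'n::finite set \<Rightarrow> (real^'n) set" where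
  "NK K = {w. l1norm (restrict_vec w K) \<ge> l1norm (restrict_vec w (- K))}"

definition HK :: "'n::finite set \<Rightarrow> (real^'n) set" where
  "HK K = {w. (\<forall>i\<in>K. w $ i \<le> 0) \<and> (\<forall>i\<in>- K. w $ i \<ge> 0)}"

definition matrix_kernel :: "real^'n::finite^'m::finite \<Rightarrow> (real^'n) set" where
  "matrix_kernel A = {x. A *v x = 0}"

definition Pbin_feasible :: "real^'n::finite^'m::finite \<Rightarrow> real^'m \<Rightarrow> (real^'n) set" where
  "Pbin_feasible A b = {x. A *v x = b \<and> (\<forall>i. 0 \<le> x $ i \<and> x $ i \<le> 1)}"

definition Pbin_unique_solution :: "real^'n::finite^'m::finite \<Rightarrow> real^'m \<Rightarrow> real^'n \<Rightarrow> bool" where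
  "Pbin_unique_solution A b x \<longleftrightarrow> x \<in> Pbin_feasible A b \<and>
     (\<forall>y\<in>Pbin_feasible A b. y \<noteq> x \<longrightarrow> l1norm x < l1norm y)"

end

theory Submission
  imports Defs
begin

text \<open>Write a feasible point of (P_bin) as 1_K + w. Feasibility means that w lies in the
  kernel, in the orthant H_K and in the unit box; on H_K the l1 norm is affine, so 1_K is strictly
  better exactly when w is not in N_K. Since the kernel, N_K and H_K are cones, the box constraint
  is no restriction, which gives the equivalence. For binary vectors the l1 and l0 norms coincide,
  whence the uniqueness of the sparsest binary solution.\<close>

lemma l1norm_nonneg: "l1norm x \<ge> 0"
  unfolding l1norm_def by (simp add: sum_nonneg)

lemma abs_component_le_l1norm: "\<bar>x $ i\<bar> \<le> l1norm x"
  unfolding l1norm_def by (rule member_le_sum[of i UNIV "\<lambda>i. \<bar>x $ i\<bar>", simplified])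

lemma l1norm_restrict_scaleR:
  "l1norm (restrict_vec (c *\<^sub>R w) S) = \<bar>c\<bar> * l1norm (restrict_vec w S)"
  unfolding l1norm_def restrict_vec_def
  by (simp add: sum_distrib_left abs_mult if_distrib cong: if_cong)

lemma l1norm_eq_l0norm_binary:
  assumes "\<forall>i. x $ i \<in> {0, 1}"
  shows "l1norm x = real (l0norm x)"
proof -
  have "l1norm x = (\<Sum>i\<in>UNIV. if x $ i \<noteq> 0 then 1 else 0)"
    unfolding l1norm_def using assms by (intro sum.cong) auto
  also have "\<dots> = real (l0norm x)"
    unfolding l0norm_def by (simp add: sum.If_cases)
  finally show ?thesis .
qed

lemma ind_vec_binary: "\<forall>i. ind_vec K $ i \<in> {0, 1}"
  unfolding ind_vec_def by simp

lemma ind_vec_add_component_in_unit_interval_iff: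
  "0 \<le> (ind_vec K + w) $ i \<and> (ind_vec K + w) $ i \<le> 1
     \<longleftrightarrow> (i \<in> K \<longrightarrow> w $ i \<le> 0) \<and> (i \<notin> K \<longrightarrow> w $ i \<ge> 0) \<and> \<bar>w $ i\<bar> \<le> 1"
  unfolding ind_vec_def by (cases "i \<in> K") auto

lemma ind_vec_add_feasible_iff:
  "ind_vec K + w \<in> Pbin_feasible A (A *v ind_vec K)
     \<longleftrightarrow> w \<in> matrix_kernel A \<and> w \<in> HK K \<and> (\<forall>i. \<bar>w $ i\<bar> \<le> 1)"
proof -
  have "ind_vec K + w \<in> Pbin_feasible A (A *v ind_vec K)
          \<longleftrightarrow> A *v w = 0 \<and> (\<forall>i. 0 \<le> (ind_vec K + w) $ i \<and> (ind_vec K + w) $ i \<le> 1)"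
    unfolding Pbin_feasible_def by (simp add: matrix_vector_right_distrib)
  also have "\<dots> \<longleftrightarrow> w \<in> matrix_kernel A \<and> w \<in> HK K \<and> (\<forall>i. \<bar>w $ i\<bar> \<le> 1)"
    unfolding ind_vec_add_component_in_unit_interval_iff matrix_kernel_def HK_def by blast
  finally show ?thesis .
qed

lemma l1norm_ind_vec_add:
  assumes "w \<in> HK K" and "\<forall>i. \<bar>w $ i\<bar> \<le> 1"
  shows "l1norm (ind_vec K + w)
           = l1norm (ind_vec K) - l1norm (restrict_vec w K) + l1norm (restrict_vec w (- K))"
proof -
  have "\<bar>(ind_vec K + w) $ i\<bar>
          = \<bar>ind_vec K $ i\<bar> - \<bar>restrict_vec w K $ i\<bar> + \<bar>restrict_vec w (- K) $ i\<bar>" for i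
    using assms(1) assms(2)[rule_format, of i] unfolding HK_def ind_vec_def restrict_vec_def
    by (cases "i \<in> K") auto
  then show ?thesis
    unfolding l1norm_def by (simp add: sum.distrib sum_subtractf)
qed

lemma Pbin_unique_solution_ind_vec_iff:
  "Pbin_unique_solution A (A *v ind_vec K) (ind_vec K)
     \<longleftrightarrow> (\<forall>w \<in> matrix_kernel A \<inter> NK K \<inter> HK K. (\<forall>i. \<bar>w $ i\<bar> \<le> 1) \<longrightarrow> w = 0)"
    (is "?unique \<longleftrightarrow> ?trivial")
proof
  assume ?unique
  show ?trivial
  proof (intro ballI impI)
    fix w assume w: "w \<in> matrix_kernel A \<inter> NK K \<inter> HK K" and box: "\<forall>i. \<bar>w $ i\<bar> \<le> 1"
    show "w = 0"
    proof (rule ccontr)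
      assume "w \<noteq> 0"
      moreover have "ind_vec K + w \<in> Pbin_feasible A (A *v ind_vec K)"
        using w box by (simp add: ind_vec_add_feasible_iff)
      ultimately have "l1norm (ind_vec K) < l1norm (ind_vec K + w)"
        using \<open>?unique\<close> unfolding Pbin_unique_solution_def by simp
      then show False
        using w box l1norm_ind_vec_add[of w K] unfolding NK_def by simp
    qed
  qed
next
  assume ?trivial
  have "ind_vec K + 0 \<in> Pbin_feasible A (A *v ind_vec K)"
    unfolding ind_vec_add_feasible_iff by (simp add: matrix_kernel_def HK_def)
  moreover have "l1norm (ind_vec K) < l1norm y"
    if y: "y \<in> Pbin_feasible A (A *v ind_vec K)" "y \<noteq> ind_vec K" for y
  proof -
    define w where "w = y - ind_vec K"
    have y_eq: "y = ind_vec K + w" and "w \<noteq> 0"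
      using y(2) unfolding w_def by simp_all
    then have w: "w \<in> matrix_kernel A" "w \<in> HK K" "\<forall>i. \<bar>w $ i\<bar> \<le> 1"
      using y(1) unfolding y_eq ind_vec_add_feasible_iff by simp_all
    with \<open>?trivial\<close> \<open>w \<noteq> 0\<close> have "w \<notin> NK K" by blast
    then show ?thesis
      using y_eq l1norm_ind_vec_add[OF w(2,3)] unfolding NK_def by simp
  qed
  ultimately show ?unique
    unfolding Pbin_unique_solution_def by auto
qed

lemma scaleR_mem_kernel_NK_HK:
  assumes "w \<in> matrix_kernel A \<inter> NK K \<inter> HK K" and "c > 0"
  shows "c *\<^sub>R w \<in> matrix_kernel A \<inter> NK K \<inter> HK K"
  using assms unfolding matrix_kernel_def NK_def HK_def
  by (auto simp: l1norm_restrict_scaleR matrix_vector_mult_scaleR mult_nonneg_nonpos)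

lemma zero_mem_kernel_NK_HK: "0 \<in> matrix_kernel A \<inter> NK K \<inter> HK K"
  unfolding matrix_kernel_def NK_def HK_def restrict_vec_def l1norm_def
  by (simp add: if_distrib cong: if_cong)

lemma cone_eq_zero_iff_unit_box:
  "matrix_kernel A \<inter> NK K \<inter> HK K = {0}
     \<longleftrightarrow> (\<forall>w \<in> matrix_kernel A \<inter> NK K \<inter> HK K. (\<forall>i. \<bar>w $ i\<bar> \<le> 1) \<longrightarrow> w = 0)"
proof
  assume trivial: "\<forall>w \<in> matrix_kernel A \<inter> NK K \<inter> HK K. (\<forall>i. \<bar>w $ i\<bar> \<le> 1) \<longrightarrow> w = 0"
  show "matrix_kernel A \<inter> NK K \<inter> HK K = {0}"
  proof (intro equalityI subsetI)
    fix w assume w: "w \<in> matrix_kernel A \<inter> NK K \<inter> HK K"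
    define c where "c = 1 / (1 + l1norm w)"
    have "c > 0"
      unfolding c_def using l1norm_nonneg[of w] by simp
    moreover have "\<bar>(c *\<^sub>R w) $ i\<bar> \<le> 1" for i
      unfolding c_def using abs_component_le_l1norm[of w i] l1norm_nonneg[of w]
      by (simp add: abs_mult)
    ultimately have "c *\<^sub>R w = 0"
      using trivial scaleR_mem_kernel_NK_HK[OF w] by blast
    with \<open>c > 0\<close> show "w \<in> {0}" by simp
  qed (use zero_mem_kernel_NK_HK in simp)
qed simp

theorem theorem2p3:
  fixes A :: "real^'n::finite^'m::finite" and K :: "'n set"
  shows "(matrix_kernel A \<inter> NK K \<inter> HK K = {0}
            \<longleftrightarrow> Pbin_unique_solution A (A *v ind_vec K) (ind_vec K))
       \<and> ((matrix_kernel A \<inter> NK K \<inter> HK K = {0}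
            \<or> Pbin_unique_solution A (A *v ind_vec K) (ind_vec K))
          \<longrightarrow> (\<forall>x::real^'n. (\<forall>i. x $ i \<in> {0, 1}) \<and> A *v x = A *v ind_vec K \<and> x \<noteq> ind_vec K
                 \<longrightarrow> l0norm (ind_vec K) < l0norm x))"
proof -
  have equiv: "matrix_kernel A \<inter> NK K \<inter> HK K = {0}
                 \<longleftrightarrow> Pbin_unique_solution A (A *v ind_vec K) (ind_vec K)"
    unfolding cone_eq_zero_iff_unit_box Pbin_unique_solution_ind_vec_iff ..
  have "l0norm (ind_vec K) < l0norm x"
    if unique: "Pbin_unique_solution A (A *v ind_vec K) (ind_vec K)"
      and x: "\<forall>i. x $ i \<in> {0, 1}" "A *v x = A *v ind_vec K" "x \<noteq> ind_vec K" for x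
  proof -
    have "0 \<le> x $ i \<and> x $ i \<le> 1" for i
      using x(1)[rule_format, of i] by auto
    then have "x \<in> Pbin_feasible A (A *v ind_vec K)"
      using x(2) unfolding Pbin_feasible_def by simp
    then have "l1norm (ind_vec K) < l1norm x"
      using unique x(3) unfolding Pbin_unique_solution_def by blast
    then show ?thesis
      using l1norm_eq_l0norm_binary[OF x(1)] l1norm_eq_l0norm_binary[OF ind_vec_binary[of K]] by simp
  qed
  then show ?thesis
    using equiv by blast
qed

end
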